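(* Let $D\ge1$, let $Q_D$ be the $D$-dimensional hypercube on $X=\{0,1\}^D$ with adjacency matrix $A$, and let $E_0V$ be the eigenspace of $A$ in $V=\mathbb{R}^X$ for the eigenvalue $D$. Then $BE_0V=0$ for every antisymmetric $A$-like matrix $B$.
   Context: $Q_D$ is the graph with vertex set $X=\{0,1\}^D$, two vertices adjacent iff they differ in exactly one coordinate. Matrices are real with rows and columns indexed by $X$ and act on $V=\mathbb{R}^X$. A matrix $B$ is $A$-like if $BA=AB$ and $B_{xy}=0$ for all $x,y\in X$ that are neither equal nor adjacent; it is antisymmetric if $B^t=-B$. *)

theory Defs
  imports Complex_Main
begin

definition hcube :: "nat \<Rightarrow> bool list set" where
  "hcube D = {xs. length xs = D}"

definition hadj :: "nat \<Rightarrow> bool list \<Rightarrow> bool list \<Rightarrow> bool" where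
  "hadj D x y \<longleftrightarrow> card {i. i < D \<and> x ! i \<noteq> y ! i} = 1"

text \<open>Matrices with rows and columns indexed by X are functions X -> X -> real
  (only values on X matter); vectors in V = R^X are functions X -> real.\<close>
definition adjA :: "nat \<Rightarrow> bool list \<Rightarrow> bool list \<Rightarrow> real" where
  "adjA D x y = (if hadj D x y then 1 else 0)"

definition mmult :: "nat \<Rightarrow> (bool list \<Rightarrow> bool list \<Rightarrow> real) \<Rightarrow> (bool list \<Rightarrow> bool list \<Rightarrow> real)
    \<Rightarrow> bool list \<Rightarrow> bool list \<Rightarrow> real" where
  "mmult D M N x y = (\<Sum>z\<in>hcube D. M x z * N z y)"

definition mvec :: "nat \<Rightarrow> (bool list \<Rightarrow> bool list \<Rightarrow> real) \<Rightarrow> (bool list \<Rightarrow> real)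
    \<Rightarrow> bool list \<Rightarrow> real" where
  "mvec D M v x = (\<Sum>y\<in>hcube D. M x y * v y)"

definition A_like :: "nat \<Rightarrow> (bool list \<Rightarrow> bool list \<Rightarrow> real) \<Rightarrow> bool" where
  "A_like D B \<longleftrightarrow>
     (\<forall>x\<in>hcube D. \<forall>y\<in>hcube D. mmult D B (adjA D) x y = mmult D (adjA D) B x y) \<and>
     (\<forall>x\<in>hcube D. \<forall>y\<in>hcube D. x \<noteq> y \<and> \<not> hadj D x y \<longrightarrow> B x y = 0)"

definition antisymmetric :: "nat \<Rightarrow> (bool list \<Rightarrow> bool list \<Rightarrow> real) \<Rightarrow> bool" where
  "antisymmetric D B \<longleftrightarrow> (\<forall>x\<in>hcube D. \<forall>y\<in>hcube D. B y x = - B x y)"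

definition E0V :: "nat \<Rightarrow> (bool list \<Rightarrow> real) set" where
  "E0V D = {v. \<forall>x\<in>hcube D. mvec D (adjA D) v x = real D * v x}"

end

theory Submission
  imports Defs
begin

text \<open>Since A is D-regular, every v \<in> E_0V has Dirichlet energy
  \<Sum> A_xy (v_x - v_y)^2 = 2 v^t (D I - A) v = 0, so v is constant along every edge.
  As B commutes with A, w = Bv lies in E_0V as well. B is supported on the diagonal and the
  edges, where v and w are constant, so w^t B v = v^t B w, which is - w^t B v by antisymmetry;
  hence |w|^2 = w^t B v = 0.\<close>

lemma eigenvector_regular_const_on_edges:
  fixes M :: "'a \<Rightarrow> 'a \<Rightarrow> real" and v :: "'a \<Rightarrow> real"
  assumes "finite S"
    and sym: "\<And>x y. x \<in> S \<Longrightarrow> y \<in> S \<Longrightarrow> M y x = M x y"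
    and nonneg: "\<And>x y. 0 \<le> M x y"
    and row_sum: "\<And>x. x \<in> S \<Longrightarrow> (\<Sum>y\<in>S. M x y) = d"
    and eigen: "\<And>x. x \<in> S \<Longrightarrow> (\<Sum>y\<in>S. M x y * v y) = d * v x"
    and "x \<in> S" "y \<in> S" "M x y \<noteq> 0"
  shows "v x = v y"
proof -
  define energy where "energy x = (\<Sum>y\<in>S. M x y * (v x - v y)^2)" for x
  have col_sum: "(\<Sum>x\<in>S. M x y * (v y)^2) = d * (v y)^2" if "y \<in> S" for y
  proof -
    have "(\<Sum>x\<in>S. M x y) = d"
      using row_sum[OF that] sym[OF _ that] by (metis (no_types, lifting) sum.cong)
    thus ?thesis by (simp add: sum_distrib_right[symmetric])
  qed
  have "(\<Sum>x\<in>S. energy x)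
      = (\<Sum>x\<in>S. \<Sum>y\<in>S. M x y * (v x)^2)
        - 2 * (\<Sum>x\<in>S. v x * (\<Sum>y\<in>S. M x y * v y))
        + (\<Sum>x\<in>S. \<Sum>y\<in>S. M x y * (v y)^2)"
    unfolding energy_def
    by (simp add: power2_diff algebra_simps sum.distrib sum_subtractf sum_distrib_left)
  also have "(\<Sum>x\<in>S. \<Sum>y\<in>S. M x y * (v x)^2) = (\<Sum>x\<in>S. d * (v x)^2)"
    by (intro sum.cong refl) (simp add: sum_distrib_right[symmetric] row_sum)
  also have "(\<Sum>x\<in>S. v x * (\<Sum>y\<in>S. M x y * v y)) = (\<Sum>x\<in>S. d * (v x)^2)"
    by (intro sum.cong refl) (simp add: eigen power2_eq_square)
  also have "(\<Sum>x\<in>S. \<Sum>y\<in>S. M x y * (v y)^2) = (\<Sum>y\<in>S. \<Sum>x\<in>S. M x y * (v y)^2)"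
    by (rule sum.swap)
  also have "\<dots> = (\<Sum>y\<in>S. d * (v y)^2)"
    by (intro sum.cong refl) (simp add: col_sum)
  finally have "(\<Sum>x\<in>S. energy x) = 0" by simp
  moreover have "0 \<le> energy x" for x
    unfolding energy_def by (simp add: nonneg sum_nonneg)
  ultimately have "energy x = 0"
    using \<open>finite S\<close> \<open>x \<in> S\<close> by (simp add: sum_nonneg_eq_0_iff)
  hence "M x y * (v x - v y)^2 = 0"
    using \<open>finite S\<close> \<open>y \<in> S\<close> by (simp add: energy_def sum_nonneg_eq_0_iff nonneg)
  thus ?thesis using \<open>M x y \<noteq> 0\<close> by simp
qed

lemma antisymmetric_form_vanishes_on_support_constant:
  fixes B :: "'a \<Rightarrow> 'a \<Rightarrow> real"
  assumes "finite S"
    and anti: "\<And>x y. x \<in> S \<Longrightarrow> y \<in> S \<Longrightarrow> B y x = - B x y"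
    and const: "\<And>x y. x \<in> S \<Longrightarrow> y \<in> S \<Longrightarrow> B x y \<noteq> 0 \<Longrightarrow> u x = u y \<and> v x = v y"
  shows "(\<Sum>x\<in>S. \<Sum>y\<in>S. u x * B x y * v y) = 0"
proof -
  let ?F = "\<Sum>x\<in>S. \<Sum>y\<in>S. u x * B x y * v y"
  have "?F = (\<Sum>x\<in>S. \<Sum>y\<in>S. u y * B x y * v x)"
    by (intro sum.cong refl) (metis const mult_eq_0_iff)
  also have "\<dots> = (\<Sum>y\<in>S. \<Sum>x\<in>S. u y * B x y * v x)"
    by (rule sum.swap)
  also have "\<dots> = (\<Sum>y\<in>S. \<Sum>x\<in>S. - (u y * B y x * v x))"
    by (intro sum.cong refl) (metis anti minus_mult_left minus_mult_right)
  also have "\<dots> = - ?F"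
    by (simp add: sum_negf)
  finally show ?thesis by simp
qed

lemma finite_hcube: "finite (hcube D)"
  using finite_lists_length_eq[of "UNIV :: bool set" D] by (simp add: hcube_def)

lemma hadj_sym: "hadj D x y = hadj D y x"
  unfolding hadj_def by (simp add: eq_commute)

definition flip :: "bool list \<Rightarrow> nat \<Rightarrow> bool list" where
  "flip x i = x[i := \<not> x ! i]"

lemma hcube_neighbours_eq_flip:
  assumes "x \<in> hcube D"
  shows "{y \<in> hcube D. hadj D x y} = flip x ` {..<D}"
proof (intro equalityI subsetI)
  fix y assume "y \<in> {y \<in> hcube D. hadj D x y}"
  hence y: "length y = D" "card {i. i < D \<and> x ! i \<noteq> y ! i} = 1"
    by (auto simp: hcube_def hadj_def)
  then obtain i where i: "{i. i < D \<and> x ! i \<noteq> y ! i} = {i}"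
    by (auto simp: card_1_singleton_iff)
  have "y = flip x i"
  proof (rule nth_equalityI)
    show "length y = length (flip x i)" using assms y by (simp add: hcube_def flip_def)
    fix j assume "j < length y"
    thus "y ! j = flip x i ! j" using i y assms unfolding flip_def hcube_def
      by (cases "j = i") auto
  qed
  moreover have "i < D" using i by auto
  ultimately show "y \<in> flip x ` {..<D}" by auto
next
  fix y assume "y \<in> flip x ` {..<D}"
  then obtain i where i: "i < D" "y = flip x i" by auto
  have "{j. j < D \<and> x ! j \<noteq> y ! j} = {i}" using i assms
    by (auto simp: flip_def hcube_def nth_list_update)
  thus "y \<in> {y \<in> hcube D. hadj D x y}" using i assms
    by (simp add: hadj_def hcube_def flip_def)
qed

lemma card_hcube_neighbours:
  assumes "x \<in> hcube D"
  shows "card {y \<in> hcube D. hadj D x y} = D"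
proof -
  have "inj_on (flip x) {..<D}"
  proof
    fix i j assume "i \<in> {..<D}" "j \<in> {..<D}" "flip x i = flip x j"
    hence "flip x i ! i = flip x j ! i" by simp
    thus "i = j" using assms \<open>i \<in> {..<D}\<close> \<open>j \<in> {..<D}\<close>
      by (auto simp: flip_def hcube_def nth_list_update split: if_splits)
  qed
  thus ?thesis using hcube_neighbours_eq_flip[OF assms] by (simp add: card_image)
qed

lemma adjA_row_sum:
  assumes "x \<in> hcube D"
  shows "(\<Sum>y\<in>hcube D. adjA D x y) = real D"
proof -
  have "hcube D \<inter> Collect (hadj D x) = {y \<in> hcube D. hadj D x y}" by auto
  thus ?thesis
    using card_hcube_neighbours[OF assms] finite_hcube by (simp add: adjA_def sum.If_cases)
qed

lemma E0V_const_on_edges: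
  assumes "v \<in> E0V D" "x \<in> hcube D" "y \<in> hcube D" "hadj D x y"
  shows "v x = v y"
proof (rule eigenvector_regular_const_on_edges[where M = "adjA D" and S = "hcube D"])
  show "\<And>x. x \<in> hcube D \<Longrightarrow> (\<Sum>y\<in>hcube D. adjA D x y * v y) = real D * v x"
    using \<open>v \<in> E0V D\<close> by (simp add: E0V_def mvec_def)
qed (use assms in \<open>simp_all add: finite_hcube adjA_row_sum, simp_all add: adjA_def hadj_sym\<close>)

lemma mvec_mmult:
  "mvec D (mmult D M N) v x = mvec D M (mvec D N v) x"
proof -
  have "mvec D (mmult D M N) v x = (\<Sum>z\<in>hcube D. \<Sum>y\<in>hcube D. M x y * N y z * v z)"
    by (simp add: mvec_def mmult_def sum_distrib_right)
  also have "\<dots> = (\<Sum>y\<in>hcube D. \<Sum>z\<in>hcube D. M x y * N y z * v z)"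
    by (rule sum.swap)
  also have "\<dots> = mvec D M (mvec D N v) x"
    by (simp add: mvec_def sum_distrib_left mult.assoc)
  finally show ?thesis .
qed

lemma mvec_cong:
  "(\<And>y. y \<in> hcube D \<Longrightarrow> v y = w y) \<Longrightarrow> mvec D M v x = mvec D M w x"
  unfolding mvec_def by simp

lemma commuting_preserves_E0V:
  assumes comm: "\<And>x y. x \<in> hcube D \<Longrightarrow> y \<in> hcube D
                   \<Longrightarrow> mmult D B (adjA D) x y = mmult D (adjA D) B x y"
    and "v \<in> E0V D"
  shows "mvec D B v \<in> E0V D"
  unfolding E0V_def
proof (intro CollectI ballI)
  fix x assume x: "x \<in> hcube D"
  have "mvec D (adjA D) (mvec D B v) x = mvec D (mmult D (adjA D) B) v x"
    by (rule mvec_mmult[symmetric])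
  also have "\<dots> = mvec D (mmult D B (adjA D)) v x"
    unfolding mvec_def using comm x by simp
  also have "\<dots> = mvec D B (\<lambda>y. real D * v y) x"
    unfolding mvec_mmult using \<open>v \<in> E0V D\<close> by (intro mvec_cong) (simp add: E0V_def)
  also have "\<dots> = real D * mvec D B v x"
    by (simp add: mvec_def sum_distrib_left algebra_simps)
  finally show "mvec D (adjA D) (mvec D B v) x = real D * mvec D B v x" .
qed

theorem lemma9p1:
  fixes D :: nat and B :: "bool list \<Rightarrow> bool list \<Rightarrow> real"
  assumes "D \<ge> 1" and "A_like D B" and "antisymmetric D B"
  shows "\<forall>v\<in>E0V D. \<forall>x\<in>hcube D. mvec D B v x = 0"
proof (intro ballI)
  fix v x assume v: "v \<in> E0V D" and x: "x \<in> hcube D"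
  define w where "w = mvec D B v"
  have w: "w \<in> E0V D"
    using assms(2) v unfolding w_def A_like_def by (blast intro: commuting_preserves_E0V)
  have support: "x = y \<or> hadj D x y" if "x \<in> hcube D" "y \<in> hcube D" "B x y \<noteq> 0" for x y
    using assms(2) that unfolding A_like_def by blast
  have "(\<Sum>x\<in>hcube D. (w x)^2) = (\<Sum>x\<in>hcube D. \<Sum>y\<in>hcube D. w x * B x y * v y)"
    by (simp add: w_def mvec_def power2_eq_square sum_distrib_left mult.assoc)
  also have "\<dots> = 0"
  proof (rule antisymmetric_form_vanishes_on_support_constant[OF finite_hcube])
    show "B y x = - B x y" if "x \<in> hcube D" "y \<in> hcube D" for x y
      using assms(3) that unfolding antisymmetric_def by blast
    show "w x = w y \<and> v x = v y" if "x \<in> hcube D" "y \<in> hcube D" "B x y \<noteq> 0" for x y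
      using support[OF that] E0V_const_on_edges[OF v that(1,2)] E0V_const_on_edges[OF w that(1,2)]
      by blast
  qed
  finally have "(w x)^2 = 0"
    using finite_hcube x by (simp add: sum_nonneg_eq_0_iff)
  thus "mvec D B v x = 0" by (simp add: w_def)
qed

end
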